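(* Let $A,B$ be finite-dimensional Hilbert spaces, $\rho$ a density matrix on $A\otimes B$, and $|\phi\rangle\in A\otimes B$ a pure state of Schmidt rank at most $r$. Let $W\subseteq A$ be a subspace with orthogonal projection $\Pi_W$ such that $\|(I-\Pi_W)\,\mathrm{tr}_B(\rho)\,(I-\Pi_W)\|_\infty\le\eta$. Then \[ \big|\langle\phi|(\Pi_W\otimes I)\rho(\Pi_W\otimes I)|\phi\rangle-\langle\phi|\rho|\phi\rangle\big|\le 2r\sqrt\eta. \]
   Context: $\|\cdot\|_\infty$ is the operator norm; the Schmidt rank of $|\phi\rangle$ is the rank of its Schmidt decomposition with respect to the bipartition $A\otimes B$. *)

theory Defs
  imports "HOL-Analysis.Analysis"
begin

text \<open>Finite-dimensional Hilbert spaces A, B are modelled as complex^'a and complex^'b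
  (arbitrary finite index types); A \<otimes> B is complex^('a \<times> 'b).\<close>

definition cinner :: "complex^'n \<Rightarrow> complex^'n \<Rightarrow> complex" where
  "cinner u v = (\<Sum>i\<in>UNIV. cnj (u $ i) * v $ i)"

definition adjoint_mat :: "complex^'n^'m \<Rightarrow> complex^'m^'n" where
  "adjoint_mat M = (\<chi> i j. cnj (M $ j $ i))"

definition hermitian :: "complex^'n^'n \<Rightarrow> bool" where
  "hermitian M \<longleftrightarrow> adjoint_mat M = M"

definition psd :: "complex^'n^'n \<Rightarrow> bool" where
  "psd M \<longleftrightarrow> (\<forall>v. cinner v (M *v v) \<in> \<real> \<and> 0 \<le> Re (cinner v (M *v v)))"

definition density_matrix :: "complex^'n^'n \<Rightarrow> bool" where
  "density_matrix \<rho> \<longleftrightarrow> hermitian \<rho> \<and> psd \<rho> \<and> trace \<rho> = 1"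

text \<open>Orthogonal projection (onto its range W).\<close>
definition orth_proj :: "complex^'n^'n \<Rightarrow> bool" where
  "orth_proj P \<longleftrightarrow> hermitian P \<and> P ** P = P"

definition tensor_vec :: "complex^'a \<Rightarrow> complex^'b \<Rightarrow> complex^('a \<times> 'b)" where
  "tensor_vec u v = (\<chi> p. u $ fst p * v $ snd p)"

definition tensor_mat :: "complex^'a^'a \<Rightarrow> complex^'b^'b \<Rightarrow> complex^('a \<times> 'b)^('a \<times> 'b)" where
  "tensor_mat M N = (\<chi> p q. M $ fst p $ fst q * N $ snd p $ snd q)"

definition ptrace_B :: "complex^('a \<times> 'b::finite)^('a \<times> 'b) \<Rightarrow> complex^'a^'a" where
  "ptrace_B \<rho> = (\<chi> i k. \<Sum>j\<in>UNIV. \<rho> $ (i, j) $ (k, j))"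

definition op_norm :: "complex^'n^'m \<Rightarrow> real" where
  "op_norm M = onorm (\<lambda>v. M *v v)"

definition schmidt_decomp :: "complex^('a::finite \<times> 'b::finite) \<Rightarrow> nat \<Rightarrow> bool" where
  "schmidt_decomp \<phi> k \<longleftrightarrow> (\<exists>(s::nat \<Rightarrow> real) (e::nat \<Rightarrow> complex^'a) (f::nat \<Rightarrow> complex^'b).
     (\<forall>i<k. s i > 0) \<and>
     (\<forall>i<k. \<forall>j<k. cinner (e i) (e j) = (if i = j then 1 else 0)) \<and>
     (\<forall>i<k. \<forall>j<k. cinner (f i) (f j) = (if i = j then 1 else 0)) \<and>
     \<phi> = (\<Sum>i<k. complex_of_real (s i) *s tensor_vec (e i) (f i)))"

definition schmidt_rank :: "complex^('a::finite \<times> 'b::finite) \<Rightarrow> nat" where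
  "schmidt_rank \<phi> = (LEAST k. schmidt_decomp \<phi> k)"

end

theory Submission
  imports Defs
begin

text \<open>
  Write \<open>Q = 1 - P\<close> and \<open>|x|\<^sub>\<rho> = sqrt \<langle>x, \<rho> x\<rangle>\<close> for the seminorm of the positive
  form \<open>\<rho>\<close>. The quantity to bound is \<open>|(P \<otimes> 1) \<phi>|\<^sub>\<rho>\<^sup>2 - |\<phi>|\<^sub>\<rho>\<^sup>2\<close>; as \<open>tr \<rho> = 1\<close> both
  seminorms are at most \<open>1\<close>, so it is at most \<open>2 |(Q \<otimes> 1) \<phi>|\<^sub>\<rho>\<close> in absolute value.
  For a Schmidt decomposition \<open>\<phi> = \<Sum>\<^sub>i s\<^sub>i e\<^sub>i \<otimes> f\<^sub>i\<close> with \<open>k\<close> terms, the triangle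
  inequality and \<open>|x \<otimes> f|\<^sub>\<rho>\<^sup>2 \<le> |f|\<^sup>2 \<langle>x, tr\<^sub>B \<rho> x\<rangle>\<close> (Cauchy-Schwarz over a basis of \<open>B\<close>)
  give \<open>|(Q \<otimes> 1) \<phi>|\<^sub>\<rho> \<le> (\<Sum>\<^sub>i s\<^sub>i) sqrt \<eta> \<le> sqrt k sqrt \<eta>\<close>, because \<open>\<Sum>\<^sub>i s\<^sub>i\<^sup>2 = 1\<close>;
  finally \<open>sqrt k \<le> k \<le> r\<close>.

  Since the Schmidt rank is defined by \<open>LEAST\<close>, a Schmidt decomposition must also be shown
  to exist. It is built greedily, as in the variational characterisation of singular values:
  each new \<open>e\<^sub>i\<close> maximises \<open>|(\<langle>x| \<otimes> 1) \<phi>|\<close> over unit vectors \<open>x\<close> orthogonal to the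
  previous ones.
\<close>

lemma cinner_add_left: "cinner (x + y) z = cinner x z + cinner y z"
  by (simp add: cinner_def distrib_right sum.distrib)

lemma cinner_add_right: "cinner x (y + z) = cinner x y + cinner x z"
  by (simp add: cinner_def distrib_left sum.distrib)

lemma cinner_diff_right: "cinner x (y - z) = cinner x y - cinner x z"
  by (simp add: cinner_def right_diff_distrib sum_subtractf)

lemma cinner_minus_right: "cinner x (- y) = - cinner x y"
  by (simp add: cinner_def sum_negf)

lemma cinner_scale_left: "cinner (c *s x) y = cnj c * cinner x y"
  by (simp add: cinner_def sum_distrib_left algebra_simps)

lemma cinner_scale_right: "cinner x (c *s y) = c * cinner x y"
  by (simp add: cinner_def sum_distrib_left algebra_simps)

lemma cinner_zero_left [simp]: "cinner 0 x = 0"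
  by (simp add: cinner_def)

lemma cinner_zero_right [simp]: "cinner x 0 = 0"
  by (simp add: cinner_def)

lemma cinner_sum_left: "cinner (\<Sum>i\<in>A. f i) x = (\<Sum>i\<in>A. cinner (f i) x)"
  by (induction A rule: infinite_finite_induct) (auto simp: cinner_add_left)

lemma cinner_sum_right: "cinner x (\<Sum>i\<in>A. f i) = (\<Sum>i\<in>A. cinner x (f i))"
  by (induction A rule: infinite_finite_induct) (auto simp: cinner_add_right)

lemma cnj_cinner: "cnj (cinner x y) = cinner y x"
  by (simp add: cinner_def mult.commute)

lemma Re_cinner: "Re (cinner x y) = inner x y"
  by (simp add: cinner_def inner_vec_def inner_complex_def Re_sum)

lemma cinner_self: "cinner x x = of_real ((norm x)\<^sup>2)"
proof -
  have "Im (cinner x x) = 0"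
    by (simp add: cinner_def Im_sum)
  moreover have "Re (cinner x x) = (norm x)\<^sup>2"
    by (simp add: Re_cinner power2_norm_eq_inner)
  ultimately show ?thesis
    by (simp add: complex_eq_iff)
qed

lemma norm_eq_1_iff_cinner_self: "norm x = 1 \<longleftrightarrow> cinner x x = 1"
proof -
  have "cinner x x = 1 \<longleftrightarrow> (norm x)\<^sup>2 = 1"
    by (simp only: cinner_self of_real_eq_1_iff)
  then show ?thesis
    using norm_ge_zero[of x] by (auto simp: power2_eq_1_iff)
qed

lemma cinner_axis_left: "cinner (axis p 1) v = v $ p"
  unfolding cinner_def axis_def
  by (simp add: if_distrib[of cnj] if_distrib[of "\<lambda>z. z * _"] cong: if_cong)

lemma matrix_vector_mult_axis: "(M *v axis k 1) $ i = M $ i $ k" for M :: "complex^'n^'m"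
  unfolding matrix_vector_mult_def axis_def
  by (simp add: if_distrib[of "\<lambda>z. _ * z"] cong: if_cong)

lemma cinner_adjoint: "cinner x (M *v y) = cinner (adjoint_mat M *v x) y"
proof -
  have "cinner x (M *v y) = (\<Sum>i\<in>UNIV. \<Sum>j\<in>UNIV. cnj (x$i) * M$i$j * y$j)"
    unfolding cinner_def matrix_vector_mult_def by (simp add: sum_distrib_left mult.assoc)
  also have "\<dots> = (\<Sum>j\<in>UNIV. \<Sum>i\<in>UNIV. cnj (x$i) * M$i$j * y$j)"
    by (rule sum.swap)
  also have "\<dots> = cinner (adjoint_mat M *v x) y"
    unfolding cinner_def matrix_vector_mult_def adjoint_mat_def
    by (simp add: sum_distrib_left sum_distrib_right mult_ac)
  finally show ?thesis .
qed

lemma norm_cinner_le: "cmod (cinner x y) \<le> norm x * norm y"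
proof -
  have "cmod (cinner x y) \<le> (\<Sum>i\<in>UNIV. cmod (x$i) * cmod (y$i))"
    unfolding cinner_def by (rule order_trans[OF norm_sum]) (simp add: norm_mult)
  also have "\<dots> \<le> L2_set (\<lambda>i. cmod (x$i)) UNIV * L2_set (\<lambda>i. cmod (y$i)) UNIV"
    using L2_set_mult_ineq[of "\<lambda>i. cmod (x$i)" "\<lambda>i. cmod (y$i)" UNIV] by simp
  finally show ?thesis
    by (simp add: norm_vec_def)
qed

lemma norm_scale_vec: "norm (c *s x) = cmod c * norm x" for x :: "complex^'n"
  by (simp add: norm_vec_def L2_set_def norm_mult power_mult_distrib real_sqrt_mult
      flip: sum_distrib_left)

lemma norm_add_sq_cinner:
  "(norm (x + y))\<^sup>2 = (norm x)\<^sup>2 + 2 * Re (cinner x y) + (norm y)\<^sup>2"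
  by (simp add: Re_cinner power2_norm_eq_inner inner_add inner_commute)

lemma matrix_vector_mult_scale: "M *v (c *s x) = c *s (M *v x)" for M :: "complex^'n^'m"
  by (simp add: vec_eq_iff matrix_vector_mult_def sum_distrib_left mult_ac)

lemma matrix_vector_mult_sum: "M *v (\<Sum>i\<in>A. f i) = (\<Sum>i\<in>A. M *v f i)" for M :: "complex^'n^'m"
  by (induction A rule: infinite_finite_induct) (auto simp: matrix_vector_right_distrib)

lemma Re_cinner_le_op_norm: "Re (cinner x (M *v x)) \<le> op_norm M * (norm x)\<^sup>2"
proof -
  have "Re (cinner x (M *v x)) \<le> norm x * norm (M *v x)"
    by (rule order_trans[OF complex_Re_le_cmod norm_cinner_le])
  also have "\<dots> \<le> norm x * (op_norm M * norm x)"
    unfolding op_norm_def by (intro mult_left_mono onorm) simp_all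
  finally show ?thesis
    by (simp add: power2_eq_square mult_ac)
qed

lemma op_norm_nonneg: "0 \<le> op_norm M"
  unfolding op_norm_def by (rule onorm_pos_le) simp

lemma nonneg_quadratic_discriminant:
  fixes a b c :: real
  assumes nonneg: "\<And>t. 0 \<le> a * t\<^sup>2 + 2 * b * t + c" and "0 \<le> a"
  shows "b\<^sup>2 \<le> a * c"
proof (cases "a = 0")
  case True
  have "b = 0"
  proof (rule ccontr)
    assume "b \<noteq> 0"
    have "0 \<le> 2 * b * (- (c + 1) / (2 * b)) + c"
      using nonneg[of "- (c + 1) / (2 * b)"] True by simp
    also have "\<dots> = -1"
      using \<open>b \<noteq> 0\<close> by (simp add: field_simps)
    finally show False
      by simp
  qed
  then show ?thesis
    using True by simp
next
  case False
  then have "a > 0"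
    using \<open>0 \<le> a\<close> by simp
  have "0 \<le> a * (- b / a)\<^sup>2 + 2 * b * (- b / a) + c"
    by (rule nonneg)
  also have "\<dots> = c - b\<^sup>2 / a"
    using \<open>a > 0\<close> by (simp add: field_simps power2_eq_square)
  finally show ?thesis
    using \<open>a > 0\<close> by (simp add: field_simps mult.commute)
qed

section \<open>The seminorm of a positive semidefinite matrix\<close>

locale psd_hermitian =
  fixes \<rho> :: "complex^'n^'n"
  assumes hermitian: "hermitian \<rho>" and psd: "psd \<rho>"
begin

definition seminorm :: "complex^'n \<Rightarrow> real" where
  "seminorm x = sqrt (Re (cinner x (\<rho> *v x)))"

lemma Re_cinner_self_nonneg: "0 \<le> Re (cinner x (\<rho> *v x))"
  using psd unfolding psd_def by blast

lemma seminorm_nonneg: "0 \<le> seminorm x"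
  by (simp add: seminorm_def Re_cinner_self_nonneg)

lemma seminorm_sq: "(seminorm x)\<^sup>2 = Re (cinner x (\<rho> *v x))"
  by (simp add: seminorm_def Re_cinner_self_nonneg)

lemma cinner_self_eq_seminorm_sq: "cinner x (\<rho> *v x) = of_real ((seminorm x)\<^sup>2)"
  using psd unfolding psd_def seminorm_sq by (metis Re_complex_of_real Reals_cases)

lemma Re_cinner_commute: "Re (cinner y (\<rho> *v x)) = Re (cinner x (\<rho> *v y))"
proof -
  have "cinner y (\<rho> *v x) = cnj (cinner x (\<rho> *v y))"
    using hermitian by (simp add: cinner_adjoint cnj_cinner hermitian_def)
  then show ?thesis
    by simp
qed

lemma seminorm_add_sq:
  "(seminorm (x + y))\<^sup>2 = (seminorm x)\<^sup>2 + 2 * Re (cinner x (\<rho> *v y)) + (seminorm y)\<^sup>2"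
  using Re_cinner_commute[of x y]
  by (simp add: seminorm_sq cinner_add_left cinner_add_right matrix_vector_right_distrib)

lemma seminorm_scale: "seminorm (c *s x) = cmod c * seminorm x"
proof -
  have "c * cnj c = of_real ((cmod c)\<^sup>2)"
    by (rule complex_norm_square[symmetric])
  then have "cinner (c *s x) (\<rho> *v (c *s x)) = of_real ((cmod c)\<^sup>2) * cinner x (\<rho> *v x)"
    by (simp add: cinner_scale_left cinner_scale_right matrix_vector_mult_scale mult_ac)
  then show ?thesis
    by (simp add: seminorm_def real_sqrt_mult)
qed

lemma Re_cinner_le_seminorm: "Re (cinner x (\<rho> *v y)) \<le> seminorm x * seminorm y"
proof -
  have "(Re (cinner x (\<rho> *v y)))\<^sup>2 \<le> (seminorm y)\<^sup>2 * (seminorm x)\<^sup>2"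
  proof (rule nonneg_quadratic_discriminant)
    fix t :: real
    have "(seminorm (x + of_real t *s y))\<^sup>2
        = (seminorm y)\<^sup>2 * t\<^sup>2 + 2 * Re (cinner x (\<rho> *v y)) * t + (seminorm x)\<^sup>2"
      by (simp add: seminorm_add_sq seminorm_scale cinner_scale_right matrix_vector_mult_scale
          power_mult_distrib)
    then show "0 \<le> (seminorm y)\<^sup>2 * t\<^sup>2 + 2 * Re (cinner x (\<rho> *v y)) * t + (seminorm x)\<^sup>2"
      by (metis zero_le_power2)
  qed simp
  then show ?thesis
    by (simp add: power2_le_iff_abs_le seminorm_nonneg power_mult_distrib[symmetric] mult.commute)
qed

lemma seminorm_triangle: "seminorm (x + y) \<le> seminorm x + seminorm y"
proof -
  have "(seminorm (x + y))\<^sup>2 \<le> (seminorm x + seminorm y)\<^sup>2"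
    using Re_cinner_le_seminorm[of x y] by (simp add: seminorm_add_sq power2_sum)
  then show ?thesis
    by (simp add: power2_le_iff_abs_le seminorm_nonneg)
qed

lemma seminorm_sum: "seminorm (\<Sum>i\<in>A. f i) \<le> (\<Sum>i\<in>A. seminorm (f i))"
proof (induction A rule: infinite_finite_induct)
  case (insert i A)
  then show ?case
    using seminorm_triangle[of "f i" "sum f A"] by simp
qed (simp_all add: seminorm_def)

lemma seminorm_sum_scale_le:
  assumes "finite A"
  shows "seminorm (\<Sum>j\<in>A. c j *s v j) \<le> L2_set (\<lambda>j. cmod (c j)) A * L2_set (\<lambda>j. seminorm (v j)) A"
proof -
  have "seminorm (\<Sum>j\<in>A. c j *s v j) \<le> (\<Sum>j\<in>A. \<bar>cmod (c j)\<bar> * \<bar>seminorm (v j)\<bar>)"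
    using seminorm_sum[of "\<lambda>j. c j *s v j" A] by (simp add: seminorm_scale seminorm_nonneg)
  also have "\<dots> \<le> L2_set (\<lambda>j. cmod (c j)) A * L2_set (\<lambda>j. seminorm (v j)) A"
    by (rule L2_set_mult_ineq)
  finally show ?thesis .
qed

lemma seminorm_le_norm: "seminorm x \<le> sqrt (Re (trace \<rho>)) * norm x"
proof -
  have "seminorm x = seminorm (\<Sum>p\<in>UNIV. (x$p) *s axis p 1)"
    by (simp add: basis_expansion)
  also have "\<dots> \<le> L2_set (\<lambda>p. cmod (x$p)) UNIV * L2_set (\<lambda>p. seminorm (axis p 1)) UNIV"
    by (rule seminorm_sum_scale_le) simp
  also have "L2_set (\<lambda>p. seminorm (axis p 1)) UNIV = sqrt (Re (trace \<rho>))"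
    by (simp add: L2_set_def seminorm_sq cinner_axis_left matrix_vector_mult_axis trace_def
        Re_sum)
  finally show ?thesis
    by (simp add: norm_vec_def mult.commute)
qed

lemma abs_seminorm_diff_le: "\<bar>seminorm x - seminorm y\<bar> \<le> seminorm (x - y)"
proof -
  have "seminorm (y - x) = seminorm (x - y)"
    using seminorm_scale[of "-1" "x - y"] by (simp add: vector_sneg_minus1[symmetric])
  then show ?thesis
    using seminorm_triangle[of "x - y" y] seminorm_triangle[of "y - x" x] by simp
qed

lemma abs_seminorm_sq_diff_le:
  assumes "seminorm x \<le> 1" and "seminorm y \<le> 1"
  shows "\<bar>(seminorm x)\<^sup>2 - (seminorm y)\<^sup>2\<bar> \<le> 2 * seminorm (x - y)"
proof -
  have "(seminorm x)\<^sup>2 - (seminorm y)\<^sup>2 = (seminorm x - seminorm y) * (seminorm x + seminorm y)"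
    by (simp add: power2_eq_square algebra_simps)
  then have "\<bar>(seminorm x)\<^sup>2 - (seminorm y)\<^sup>2\<bar> = \<bar>seminorm x - seminorm y\<bar> * (seminorm x + seminorm y)"
    by (simp add: abs_mult seminorm_nonneg)
  also have "\<dots> \<le> seminorm (x - y) * 2"
    using assms abs_seminorm_diff_le by (intro mult_mono) (auto simp: seminorm_nonneg)
  finally show ?thesis
    by simp
qed

end

lemma adjoint_mat_id: "adjoint_mat (mat 1 :: complex^'n^'n) = mat 1"
  by (simp add: vec_eq_iff adjoint_mat_def mat_def)

lemma adjoint_adjoint_mat: "adjoint_mat (adjoint_mat M) = M"
  by (simp add: vec_eq_iff adjoint_mat_def)

lemma adjoint_mat_diff: "adjoint_mat (A - B) = adjoint_mat A - adjoint_mat B"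
  by (simp add: vec_eq_iff adjoint_mat_def)

lemma adjoint_tensor_mat: "adjoint_mat (tensor_mat A B) = tensor_mat (adjoint_mat A) (adjoint_mat B)"
  by (simp add: vec_eq_iff adjoint_mat_def tensor_mat_def)

lemma tensor_mat_diff_left: "tensor_mat (A - B) C = tensor_mat A C - tensor_mat B C"
  by (simp add: vec_eq_iff tensor_mat_def left_diff_distrib)

lemma tensor_mat_id: "tensor_mat (mat 1 :: complex^'a^'a) (mat 1 :: complex^'b^'b) = mat 1"
  by (auto simp: vec_eq_iff tensor_mat_def mat_def prod_eq_iff)

lemma sum_UNIV_prod: "(\<Sum>p\<in>UNIV. g p) = (\<Sum>i\<in>UNIV. \<Sum>k\<in>UNIV. g (i, k))"
  by (simp add: sum.cartesian_product split_def)

lemma tensor_mat_mult: "tensor_mat A B ** tensor_mat C D = tensor_mat (A ** C) (B ** D)"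
  for A C :: "complex^'a::finite^'a" and B D :: "complex^'b::finite^'b"
  unfolding matrix_matrix_mult_def tensor_mat_def
  by (simp add: vec_eq_iff sum_UNIV_prod sum_product mult_ac)

lemma tensor_mat_vec: "tensor_mat M N *v tensor_vec u v = tensor_vec (M *v u) (N *v v)"
  for M :: "complex^'a::finite^'a" and N :: "complex^'b::finite^'b"
  unfolding matrix_vector_mult_def tensor_mat_def tensor_vec_def
  by (simp add: vec_eq_iff sum_UNIV_prod sum_product mult_ac)

lemma cinner_tensor_vec: "cinner (tensor_vec u v) (tensor_vec u' v') = cinner u u' * cinner v v'"
  for u u' :: "complex^'a::finite" and v v' :: "complex^'b::finite"
  unfolding cinner_def tensor_vec_def
  by (simp add: sum_UNIV_prod sum_product mult_ac)

lemma tensor_vec_scale_right: "tensor_vec u (c *s v) = c *s tensor_vec u v"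
  by (simp add: vec_eq_iff tensor_vec_def mult_ac)

lemma tensor_vec_axis_expansion: "tensor_vec x f = (\<Sum>j\<in>UNIV. (f$j) *s tensor_vec x (axis j 1))"
  by (simp add: vec_eq_iff tensor_vec_def axis_def sum_component if_distrib cong: if_cong)

lemma sum_cinner_tensor_axis:
  fixes \<rho> :: "complex^('a::finite \<times> 'b::finite)^('a \<times> 'b)"
  shows "(\<Sum>j\<in>UNIV. cinner (tensor_vec x (axis j 1)) (\<rho> *v tensor_vec x (axis j 1)))
    = cinner x (ptrace_B \<rho> *v x)"
proof -
  have cinner_left: "cinner (tensor_vec x (axis j 1)) w = (\<Sum>i\<in>UNIV. cnj (x $ i) * w $ (i, j))"
    for j and w :: "complex^('a \<times> 'b)"
    unfolding cinner_def tensor_vec_def axis_def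
    by (simp add: sum_UNIV_prod if_distrib[of cnj] if_distrib[of "\<lambda>z. _ * z"]
        if_distrib[of "\<lambda>z. z * _"] cong: if_cong)
  have mv: "(\<rho> *v tensor_vec x (axis j 1)) $ p = (\<Sum>k\<in>UNIV. \<rho> $ p $ (k, j) * x $ k)" for j p
    unfolding matrix_vector_mult_def tensor_vec_def axis_def
    by (simp add: sum_UNIV_prod if_distrib[of "\<lambda>z. _ * z"] cong: if_cong)
  have "(\<Sum>j\<in>UNIV. cinner (tensor_vec x (axis j 1)) (\<rho> *v tensor_vec x (axis j 1)))
      = (\<Sum>j\<in>UNIV. \<Sum>i\<in>UNIV. \<Sum>k\<in>UNIV. cnj (x $ i) * (\<rho> $ (i, j) $ (k, j) * x $ k))"
    by (simp add: cinner_left mv sum_distrib_left)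
  also have "\<dots> = (\<Sum>i\<in>UNIV. \<Sum>j\<in>UNIV. \<Sum>k\<in>UNIV. cnj (x $ i) * (\<rho> $ (i, j) $ (k, j) * x $ k))"
    by (rule sum.swap)
  also have "\<dots> = (\<Sum>i\<in>UNIV. \<Sum>k\<in>UNIV. \<Sum>j\<in>UNIV. cnj (x $ i) * (\<rho> $ (i, j) $ (k, j) * x $ k))"
    by (rule sum.cong[OF refl], rule sum.swap)
  also have "\<dots> = cinner x (ptrace_B \<rho> *v x)"
    unfolding cinner_def matrix_vector_mult_def ptrace_B_def
    by (simp add: sum_distrib_left sum_distrib_right mult_ac)
  finally show ?thesis .
qed

lemma seminorm_tensor_vec_le:
  fixes \<rho> :: "complex^('a::finite \<times> 'b::finite)^('a \<times> 'b)"
  assumes "psd_hermitian \<rho>"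
  shows "psd_hermitian.seminorm \<rho> (tensor_vec x f) \<le> norm f * sqrt (Re (cinner x (ptrace_B \<rho> *v x)))"
proof -
  interpret psd_hermitian \<rho> by fact
  have "seminorm (tensor_vec x f)
      \<le> L2_set (\<lambda>j. cmod (f$j)) UNIV * L2_set (\<lambda>j. seminorm (tensor_vec x (axis j 1))) UNIV"
    by (subst tensor_vec_axis_expansion) (rule seminorm_sum_scale_le, simp)
  also have "L2_set (\<lambda>j. seminorm (tensor_vec x (axis j 1))) UNIV = sqrt (Re (cinner x (ptrace_B \<rho> *v x)))"
    by (simp add: L2_set_def seminorm_sq flip: sum_cinner_tensor_axis Re_sum)
  finally show ?thesis
    by (simp add: norm_vec_def)
qed

lemma seminorm_tensor_vec_conj_le:
  fixes \<rho> :: "complex^('a::finite \<times> 'b::finite)^('a \<times> 'b)"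
  assumes "psd_hermitian \<rho>"
  shows "psd_hermitian.seminorm \<rho> (tensor_vec (Q *v e) f)
    \<le> norm f * norm e * sqrt (op_norm (adjoint_mat Q ** ptrace_B \<rho> ** Q))"
proof -
  have "cinner e ((adjoint_mat Q ** ptrace_B \<rho> ** Q) *v e) = cinner (Q *v e) (ptrace_B \<rho> *v (Q *v e))"
    by (metis cinner_adjoint adjoint_adjoint_mat matrix_vector_mul_assoc)
  then have "Re (cinner (Q *v e) (ptrace_B \<rho> *v (Q *v e)))
      = Re (cinner e ((adjoint_mat Q ** ptrace_B \<rho> ** Q) *v e))"
    by simp
  also have "\<dots> \<le> op_norm (adjoint_mat Q ** ptrace_B \<rho> ** Q) * (norm e)\<^sup>2"
    by (rule Re_cinner_le_op_norm)
  finally have "sqrt (Re (cinner (Q *v e) (ptrace_B \<rho> *v (Q *v e))))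
      \<le> sqrt (op_norm (adjoint_mat Q ** ptrace_B \<rho> ** Q) * (norm e)\<^sup>2)"
    by (rule real_sqrt_le_mono)
  also have "\<dots> = norm e * sqrt (op_norm (adjoint_mat Q ** ptrace_B \<rho> ** Q))"
    by (simp add: real_sqrt_mult)
  finally have "sqrt (Re (cinner (Q *v e) (ptrace_B \<rho> *v (Q *v e))))
      \<le> norm e * sqrt (op_norm (adjoint_mat Q ** ptrace_B \<rho> ** Q))" .
  then show ?thesis
    using seminorm_tensor_vec_le[OF assms, of "Q *v e" f]
    by (metis (no_types, opaque_lifting) mult.assoc mult_left_mono norm_ge_zero order_trans)
qed

section \<open>Projection error for a state with a Schmidt decomposition\<close>

lemma orth_proj_tensor_id: "orth_proj P \<Longrightarrow> orth_proj (tensor_mat P (mat 1))"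
  by (simp add: orth_proj_def hermitian_def adjoint_tensor_mat adjoint_mat_id tensor_mat_mult)

lemma hermitian_id_minus: "hermitian P \<Longrightarrow> hermitian (mat 1 - P)"
  by (simp add: hermitian_def adjoint_mat_diff adjoint_mat_id)

lemma norm_orth_proj_le:
  assumes "orth_proj P"
  shows "norm (P *v x) \<le> norm x"
proof -
  have "cinner (P *v x) (x - P *v x) = cinner x (P *v (x - P *v x))"
    using assms by (metis cinner_adjoint orth_proj_def hermitian_def)
  also have "\<dots> = cinner x ((P - P ** P) *v x)"
    by (simp only: matrix_vector_mult_diff_distrib matrix_vector_mult_diff_rdistrib
        matrix_vector_mul_assoc)
  also have "\<dots> = 0"
    using assms by (simp add: orth_proj_def)
  finally have "(norm x)\<^sup>2 = (norm (P *v x))\<^sup>2 + (norm (x - P *v x))\<^sup>2"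
    using norm_add_sq_cinner[of "P *v x" "x - P *v x"] by simp
  then have "(norm (P *v x))\<^sup>2 \<le> (norm x)\<^sup>2"
    by simp
  then show ?thesis
    by (rule power2_le_imp_le) simp
qed

definition orthonormal_upto :: "nat \<Rightarrow> (nat \<Rightarrow> complex^'n) \<Rightarrow> bool" where
  "orthonormal_upto k e \<longleftrightarrow> (\<forall>i<k. \<forall>j<k. cinner (e i) (e j) = (if i = j then 1 else 0))"

lemma orthonormal_upto_norm: "orthonormal_upto k e \<Longrightarrow> i < k \<Longrightarrow> norm (e i) = 1"
  by (simp add: orthonormal_upto_def norm_eq_1_iff_cinner_self)

lemma schmidt_decomp_iff:
  "schmidt_decomp \<phi> k \<longleftrightarrow> (\<exists>s e f. (\<forall>i<k. s i > 0) \<and> orthonormal_upto k e \<and> orthonormal_upto k f \<and>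
     \<phi> = (\<Sum>i<k. complex_of_real (s i) *s tensor_vec (e i) (f i)))"
  by (simp add: schmidt_decomp_def orthonormal_upto_def)

lemma norm_sq_schmidt_sum:
  assumes "orthonormal_upto k e" and "orthonormal_upto k f"
  shows "(norm (\<Sum>i<k. complex_of_real (s i) *s tensor_vec (e i) (f i)))\<^sup>2 = (\<Sum>i<k. (s i)\<^sup>2)"
proof -
  define v where "v i = complex_of_real (s i) *s tensor_vec (e i) (f i)" for i
  have "cinner (v i) (v j) = (if i = j then of_real ((s i)\<^sup>2) else 0)" if "i < k" "j < k" for i j
    using assms that
    by (simp add: v_def orthonormal_upto_def cinner_scale_left cinner_scale_right cinner_tensor_vec
        power2_eq_square)
  then have "cinner (\<Sum>i<k. v i) (\<Sum>j<k. v j) = (\<Sum>i<k. of_real ((s i)\<^sup>2))"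
    by (simp add: cinner_sum_left cinner_sum_right)
  then have "of_real ((norm (\<Sum>i<k. v i))\<^sup>2) = (of_real (\<Sum>i<k. (s i)\<^sup>2) :: complex)"
    by (simp only: cinner_self of_real_sum)
  then show ?thesis
    unfolding v_def of_real_eq_iff .
qed

lemma seminorm_schmidt_residual_le:
  fixes \<rho> :: "complex^('a::finite \<times> 'b::finite)^('a \<times> 'b)"
  assumes "psd_hermitian \<rho>" and "schmidt_decomp \<phi> k"
  shows "psd_hermitian.seminorm \<rho> (tensor_mat Q (mat 1) *v \<phi>)
    \<le> sqrt (real k) * norm \<phi> * sqrt (op_norm (adjoint_mat Q ** ptrace_B \<rho> ** Q))"
proof -
  interpret psd_hermitian \<rho> by fact
  obtain s e f where s: "\<forall>i<k. s i > 0" and e: "orthonormal_upto k e" and f: "orthonormal_upto k f"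
    and \<phi>: "\<phi> = (\<Sum>i<k. complex_of_real (s i) *s tensor_vec (e i) (f i))"
    using assms(2) unfolding schmidt_decomp_iff by blast
  define c where "c = sqrt (op_norm (adjoint_mat Q ** ptrace_B \<rho> ** Q))"
  have term_le: "seminorm (tensor_vec (Q *v e i) (f i)) \<le> c" if "i < k" for i
    using seminorm_tensor_vec_conj_le[OF assms(1), of Q "e i" "f i"] e f that
    by (simp add: c_def orthonormal_upto_norm)
  have sum_le: "(\<Sum>i<k. s i) \<le> sqrt (real k) * norm \<phi>"
  proof -
    have "(\<Sum>i<k. s i) \<le> L2_set (\<lambda>_. 1) {..<k} * L2_set s {..<k}"
      using L2_set_mult_ineq[of "\<lambda>_. 1" s "{..<k}"] s by (simp add: abs_of_pos)
    also have "L2_set s {..<k} = norm \<phi>"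
      unfolding L2_set_def \<phi> by (rule real_sqrt_unique) (simp_all add: norm_sq_schmidt_sum[OF e f])
    finally show ?thesis
      by (simp add: L2_set_def)
  qed
  have "seminorm (tensor_mat Q (mat 1) *v \<phi>)
      = seminorm (\<Sum>i<k. complex_of_real (s i) *s tensor_vec (Q *v e i) (f i))"
    by (simp add: \<phi> matrix_vector_mult_sum matrix_vector_mult_scale tensor_mat_vec)
  also have "\<dots> \<le> (\<Sum>i<k. seminorm (complex_of_real (s i) *s tensor_vec (Q *v e i) (f i)))"
    by (rule seminorm_sum)
  also have "\<dots> = (\<Sum>i<k. s i * seminorm (tensor_vec (Q *v e i) (f i)))"
    using s by (intro sum.cong) (simp_all add: seminorm_scale less_imp_le)
  also have "\<dots> \<le> (\<Sum>i<k. s i) * c"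
    unfolding sum_distrib_right using s term_le by (intro sum_mono mult_left_mono) auto
  also have "\<dots> \<le> sqrt (real k) * norm \<phi> * c"
    using sum_le by (rule mult_right_mono) (simp add: c_def op_norm_nonneg)
  finally show ?thesis
    by (simp add: c_def)
qed

lemma expectation_projection_error_le:
  fixes \<rho> :: "complex^('a::finite \<times> 'b::finite)^('a \<times> 'b)"
  assumes "density_matrix \<rho>" and "norm \<phi> = 1" and "orth_proj P"
    and "op_norm ((mat 1 - P) ** ptrace_B \<rho> ** (mat 1 - P)) \<le> \<eta>"
    and "schmidt_decomp \<phi> k"
  shows "cmod (cinner \<phi> ((tensor_mat P (mat 1) ** \<rho> ** tensor_mat P (mat 1)) *v \<phi>)
               - cinner \<phi> (\<rho> *v \<phi>)) \<le> 2 * sqrt (real k) * sqrt \<eta>"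
proof -
  interpret psd_hermitian \<rho>
    using assms(1) by unfold_locales (simp_all add: density_matrix_def)
  define T :: "complex^('a \<times> 'b)^('a \<times> 'b)" where "T = tensor_mat P (mat 1)"
  have T: "orth_proj T"
    unfolding T_def using assms(3) by (rule orth_proj_tensor_id)
  have "cinner \<phi> ((T ** \<rho> ** T) *v \<phi>) = cinner \<phi> (T *v (\<rho> *v (T *v \<phi>)))"
    by (simp add: matrix_vector_mul_assoc matrix_mul_assoc)
  also have "\<dots> = of_real ((seminorm (T *v \<phi>))\<^sup>2)"
    using T by (metis cinner_adjoint orth_proj_def hermitian_def cinner_self_eq_seminorm_sq)
  finally have "cmod (cinner \<phi> ((T ** \<rho> ** T) *v \<phi>) - cinner \<phi> (\<rho> *v \<phi>))
      = \<bar>(seminorm \<phi>)\<^sup>2 - (seminorm (T *v \<phi>))\<^sup>2\<bar>"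
    by (simp only: cinner_self_eq_seminorm_sq norm_minus_commute norm_of_real flip: of_real_diff)
  also have "\<dots> \<le> 2 * seminorm (\<phi> - T *v \<phi>)"
  proof (rule abs_seminorm_sq_diff_le)
    have "\<And>x. seminorm x \<le> norm x"
      using seminorm_le_norm assms(1) by (simp add: density_matrix_def)
    then show "seminorm \<phi> \<le> 1" and "seminorm (T *v \<phi>) \<le> 1"
      using norm_orth_proj_le[OF T, of \<phi>] assms(2) by (metis order_trans)+
  qed
  also have "\<phi> - T *v \<phi> = tensor_mat (mat 1 - P) (mat 1) *v \<phi>"
    by (simp add: T_def tensor_mat_diff_left tensor_mat_id matrix_vector_mult_diff_rdistrib)
  also have "seminorm \<dots> \<le> sqrt (real k) * sqrt \<eta>"
  proof -
    have "adjoint_mat (mat 1 - P) = mat 1 - P"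
      using assms(3) hermitian_id_minus unfolding orth_proj_def hermitian_def by blast
    moreover have "sqrt (op_norm ((mat 1 - P) ** ptrace_B \<rho> ** (mat 1 - P))) \<le> sqrt \<eta>"
      using assms(4) by simp
    ultimately show ?thesis
      using seminorm_schmidt_residual_le[OF psd_hermitian_axioms assms(5), of "mat 1 - P"] assms(2)
      by (simp add: mult_left_mono order_trans)
  qed
  finally show ?thesis
    by (simp add: T_def)
qed

section \<open>Existence of Schmidt decompositions\<close>

text \<open>\<open>partial_cinner \<phi> x = (\<langle>x| \<otimes> 1) \<phi>\<close>.\<close>

definition partial_cinner :: "complex^('a::finite \<times> 'b::finite) \<Rightarrow> complex^'a \<Rightarrow> complex^'b" where
  "partial_cinner \<phi> x = (\<chi> j. \<Sum>i\<in>UNIV. cnj (x $ i) * \<phi> $ (i, j))"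

lemma partial_cinner_add: "partial_cinner \<phi> (x + y) = partial_cinner \<phi> x + partial_cinner \<phi> y"
  by (simp add: partial_cinner_def vec_eq_iff distrib_right sum.distrib)

lemma partial_cinner_diff: "partial_cinner \<phi> (x - y) = partial_cinner \<phi> x - partial_cinner \<phi> y"
  by (simp add: partial_cinner_def vec_eq_iff left_diff_distrib sum_subtractf)

lemma partial_cinner_scale: "partial_cinner \<phi> (c *s x) = cnj c *s partial_cinner \<phi> x"
  by (simp add: partial_cinner_def vec_eq_iff sum_distrib_left mult_ac)

lemma partial_cinner_zero [simp]: "partial_cinner \<phi> 0 = 0"
  by (simp add: partial_cinner_def vec_eq_iff)

lemma partial_cinner_sum: "partial_cinner \<phi> (\<Sum>i\<in>A. f i) = (\<Sum>i\<in>A. partial_cinner \<phi> (f i))"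
  by (induction A rule: infinite_finite_induct) (auto simp: partial_cinner_add)

lemma partial_cinner_axis: "partial_cinner \<phi> (axis p 1) $ j = \<phi> $ (p, j)"
  unfolding partial_cinner_def axis_def
  by (simp add: if_distrib[of cnj] if_distrib[of "\<lambda>z. z * _"] cong: if_cong)

lemma continuous_on_partial_cinner: "continuous_on A (partial_cinner \<phi>)"
proof (rule linear_continuous_on)
  have "linear (partial_cinner \<phi>)"
    by (rule linearI) (simp add: partial_cinner_add, simp add: partial_cinner_def vec_eq_iff
        scaleR_vec_def sum_distrib_left scaleR_conv_of_real mult_ac)
  then show "bounded_linear (partial_cinner \<phi>)"
    by (simp add: linear_conv_bounded_linear)
qed

lemma orthonormal_upto_residual:
  assumes "orthonormal_upto m e" and "j < m"
  shows "cinner (e j) (y - (\<Sum>i<m. cinner (e i) y *s e i)) = 0"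
proof -
  have "(\<Sum>i<m. cinner (e i) y * cinner (e j) (e i)) = (\<Sum>i<m. if i = j then cinner (e j) y else 0)"
    using assms by (intro sum.cong) (auto simp: orthonormal_upto_def)
  then show ?thesis
    using assms(2) by (simp add: cinner_diff_right cinner_sum_right cinner_scale_right)
qed

lemma orthonormal_upto_card_le:
  assumes "orthonormal_upto m (e :: nat \<Rightarrow> complex^'a::finite)"
  shows "m \<le> DIM(complex^'a)"
proof -
  have inj: "inj_on e {..<m}"
    using assms by (intro inj_onI) (metis lessThan_iff one_neq_zero orthonormal_upto_def)
  have "pairwise orthogonal (e ` {..<m})"
    using assms by (auto simp: pairwise_def orthogonal_def orthonormal_upto_def simp flip: Re_cinner)
  moreover have "0 \<notin> e ` {..<m}"
    using assms by (auto simp: orthonormal_upto_def) (metis cinner_zero_left zero_neq_one)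
  ultimately have "independent (e ` {..<m})"
    by (rule pairwise_orthogonal_independent)
  then show ?thesis
    using independent_bound card_image[OF inj] by fastforce
qed

lemma partial_cinner_maximizer:
  assumes "closed S" and scale: "\<And>c x. x \<in> S \<Longrightarrow> c *s x \<in> S"
    and "x1 \<in> S" and "partial_cinner \<phi> x1 \<noteq> 0"
  obtains x0 where "x0 \<in> S" and "norm x0 = 1" and "partial_cinner \<phi> x0 \<noteq> 0"
    and "\<And>y. y \<in> S \<Longrightarrow> norm (partial_cinner \<phi> y) \<le> norm (partial_cinner \<phi> x0) * norm y"
proof -
  define F where "F y = norm (partial_cinner \<phi> y)" for y
  define normalize where "normalize y = complex_of_real (1 / norm y) *s y" for y :: "complex^'a"
  have normalize: "normalize y \<in> S \<inter> sphere 0 1" "F (normalize y) = F y / norm y"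
    if "y \<in> S" "y \<noteq> 0" for y
    using that scale by (simp_all add: normalize_def F_def partial_cinner_scale norm_scale_vec norm_divide)
  have "compact (S \<inter> sphere 0 1)"
    using \<open>closed S\<close> by (simp add: closed_Int_compact)
  moreover have "continuous_on (S \<inter> sphere 0 1) F"
    unfolding F_def by (intro continuous_intros continuous_on_partial_cinner)
  moreover have "normalize x1 \<in> S \<inter> sphere 0 1"
    using normalize assms(3,4) by force
  ultimately obtain x0 where x0: "x0 \<in> S \<inter> sphere 0 1" and max: "\<forall>y\<in>S \<inter> sphere 0 1. F y \<le> F x0"
    using continuous_attains_sup by (metis empty_iff)
  show ?thesis
  proof
    show "x0 \<in> S" and "norm x0 = 1"
      using x0 by auto
    have "0 < F x1 / norm x1"
      using assms(4) by (cases "x1 = 0") (auto simp: F_def)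
    also have "\<dots> \<le> F x0"
      using max normalize assms(3,4) by force
    finally show "partial_cinner \<phi> x0 \<noteq> 0"
      by (auto simp: F_def)
  next
    fix y assume "y \<in> S"
    show "norm (partial_cinner \<phi> y) \<le> norm (partial_cinner \<phi> x0) * norm y"
    proof (cases "y = 0")
      case False
      then have "F y / norm y \<le> F x0"
        using max normalize \<open>y \<in> S\<close> by metis
      then show ?thesis
        using False by (simp add: F_def divide_le_eq)
    qed simp
  qed
qed

text \<open>At the maximiser the first variation of \<open>|g (x0 + t y)|\<^sup>2 - c\<^sup>2 |x0 + t y|\<^sup>2\<close> in \<open>t\<close>
  vanishes; this is the discriminant condition below.\<close>

lemma partial_cinner_maximizer_orthogonal:
  assumes add: "\<And>x y. x \<in> S \<Longrightarrow> y \<in> S \<Longrightarrow> x + y \<in> S" and scale: "\<And>c x. x \<in> S \<Longrightarrow> c *s x \<in> S"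
    and "x0 \<in> S" and "norm x0 = 1"
    and max: "\<And>y. y \<in> S \<Longrightarrow> norm (partial_cinner \<phi> y) \<le> norm (partial_cinner \<phi> x0) * norm y"
    and "y \<in> S" and "cinner x0 y = 0"
  shows "cinner (partial_cinner \<phi> x0) (partial_cinner \<phi> y) = 0"
proof -
  let ?g = "partial_cinner \<phi>"
  have Re_0: "Re (cinner (?g x0) (?g y)) = 0" if "y \<in> S" "cinner x0 y = 0" for y
  proof -
    define c where "c = norm (?g x0)"
    define R where "R = Re (cinner (?g x0) (?g y))"
    have "(- R)\<^sup>2 \<le> (c\<^sup>2 * (norm y)\<^sup>2 - (norm (?g y))\<^sup>2) * 0"
    proof (rule nonneg_quadratic_discriminant)
      fix t :: real
      have "norm (?g (x0 + of_real t *s y)) \<le> c * norm (x0 + of_real t *s y)"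
        unfolding c_def using max add scale \<open>x0 \<in> S\<close> \<open>y \<in> S\<close> by blast
      then have "(norm (?g (x0 + of_real t *s y)))\<^sup>2 \<le> c\<^sup>2 * (norm (x0 + of_real t *s y))\<^sup>2"
        by (simp add: power_mult_distrib[symmetric] power_mono)
      moreover have "(norm (?g (x0 + of_real t *s y)))\<^sup>2 = c\<^sup>2 + 2 * t * R + t\<^sup>2 * (norm (?g y))\<^sup>2"
        by (simp add: c_def R_def partial_cinner_add partial_cinner_scale norm_add_sq_cinner
            cinner_scale_right norm_scale_vec power_mult_distrib)
      moreover have "(norm (x0 + of_real t *s y))\<^sup>2 = 1 + t\<^sup>2 * (norm y)\<^sup>2"
        using \<open>norm x0 = 1\<close> \<open>cinner x0 y = 0\<close>
        by (simp add: norm_add_sq_cinner cinner_scale_right norm_scale_vec power_mult_distrib)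
      ultimately show "0 \<le> (c\<^sup>2 * (norm y)\<^sup>2 - (norm (?g y))\<^sup>2) * t\<^sup>2 + 2 * - R * t + 0"
        by (simp add: algebra_simps)
    next
      show "0 \<le> c\<^sup>2 * (norm y)\<^sup>2 - (norm (?g y))\<^sup>2"
        using max[OF \<open>y \<in> S\<close>] by (simp add: c_def power_mult_distrib[symmetric] power_mono)
    qed
    then show ?thesis
      by (simp add: R_def)
  qed
  have "Re (cinner (?g x0) (?g (\<i> *s y))) = 0"
    using Re_0 scale assms(6,7) by (simp add: cinner_scale_right)
  then have "Im (cinner (?g x0) (?g y)) = 0"
    by (simp add: partial_cinner_scale cinner_scale_right cinner_minus_right)
  then show ?thesis
    using Re_0[OF assms(6,7)] by (simp add: complex_eq_iff)
qed

lemma closed_orthogonal_complement: "closed {x. \<forall>i<m. cinner (e i) x = 0}"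
proof -
  have "continuous_on UNIV (\<lambda>x. cinner u x)" for u :: "complex^'n"
    unfolding cinner_def by (intro continuous_intros)
  then have "closed {x. cinner (e i) x = 0}" for i
    by (intro closed_Collect_eq) auto
  moreover have "{x. \<forall>i<m. cinner (e i) x = 0} = (\<Inter>i<m. {x. cinner (e i) x = 0})"
    by auto
  ultimately show ?thesis
    by auto
qed

text \<open>Invariant of the greedy construction: the \<open>e i\<close> are left singular vectors, with nonzero
  singular values, of \<open>\<phi>\<close> viewed as an \<open>A \<times> B\<close> matrix.\<close>

definition singular_family :: "complex^('a::finite \<times> 'b::finite) \<Rightarrow> nat \<Rightarrow> (nat \<Rightarrow> complex^'a) \<Rightarrow> bool"
  where "singular_family \<phi> m e \<longleftrightarrow> orthonormal_upto m e \<and> (\<forall>i<m. partial_cinner \<phi> (e i) \<noteq> 0) \<and>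
    (\<forall>i<m. \<forall>y. cinner (e i) y = 0 \<longrightarrow> cinner (partial_cinner \<phi> (e i)) (partial_cinner \<phi> y) = 0)"

lemma singular_family_orthogonal_complement:
  assumes fam: "singular_family \<phi> m e" and x0_e: "\<forall>i<m. cinner (e i) x0 = 0"
    and x0_S: "\<And>y. \<forall>i<m. cinner (e i) y = 0 \<Longrightarrow> cinner x0 y = 0 \<Longrightarrow>
      cinner (partial_cinner \<phi> x0) (partial_cinner \<phi> y) = 0"
    and "cinner x0 y = 0"
  shows "cinner (partial_cinner \<phi> x0) (partial_cinner \<phi> y) = 0"
proof -
  let ?g = "partial_cinner \<phi>"
  have e: "orthonormal_upto m e"
    using fam by (simp add: singular_family_def)
  define y' where "y' = y - (\<Sum>i<m. cinner (e i) y *s e i)"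
  have "cinner x0 (e i) = 0" if "i < m" for i
    using x0_e that cnj_cinner[of "e i" x0] by auto
  then have "cinner x0 y' = 0"
    using \<open>cinner x0 y = 0\<close> by (simp add: y'_def cinner_diff_right cinner_sum_right cinner_scale_right)
  then have "cinner (?g x0) (?g y') = 0"
    using x0_S orthonormal_upto_residual[OF e] by (simp add: y'_def)
  moreover have "cinner (?g x0) (?g (e i)) = 0" if "i < m" for i
    using fam x0_e that cnj_cinner[of "?g (e i)" "?g x0"] by (auto simp: singular_family_def)
  moreover have "?g y = ?g y' + (\<Sum>i<m. cnj (cinner (e i) y) *s ?g (e i))"
    by (simp add: y'_def partial_cinner_diff partial_cinner_sum partial_cinner_scale)
  then have "cinner (?g x0) (?g y)
      = cinner (?g x0) (?g y') + (\<Sum>i<m. cnj (cinner (e i) y) * cinner (?g x0) (?g (e i)))"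
    by (simp only: cinner_add_right cinner_sum_right cinner_scale_right)
  ultimately show ?thesis
    by simp
qed

lemma singular_family_extend:
  assumes fam: "singular_family \<phi> m e"
    and "\<forall>i<m. cinner (e i) x1 = 0" and "partial_cinner \<phi> x1 \<noteq> 0"
  shows "\<exists>e'. singular_family \<phi> (Suc m) e'"
proof -
  let ?g = "partial_cinner \<phi>"
  define S where "S = {x. \<forall>i<m. cinner (e i) x = 0}"
  have add: "x + y \<in> S" if "x \<in> S" "y \<in> S" for x y
    using that by (simp add: S_def cinner_add_right)
  have scale: "c *s x \<in> S" if "x \<in> S" for c x
    using that by (simp add: S_def cinner_scale_right)
  have "x1 \<in> S"
    using assms(2) by (simp add: S_def)
  obtain x0 where "x0 \<in> S" and "norm x0 = 1" and "?g x0 \<noteq> 0"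
    and max: "\<And>y. y \<in> S \<Longrightarrow> norm (?g y) \<le> norm (?g x0) * norm y"
    using partial_cinner_maximizer[OF _ scale \<open>x1 \<in> S\<close> assms(3)] closed_orthogonal_complement
    unfolding S_def by blast
  have x0_e: "cinner (e i) x0 = 0" "cinner x0 (e i) = 0" if "i < m" for i
    using \<open>x0 \<in> S\<close> that cnj_cinner[of "e i" x0] by (auto simp: S_def)
  have "cinner (?g x0) (?g y) = 0" if "cinner x0 y = 0" for y
  proof (rule singular_family_orthogonal_complement[OF fam _ _ that])
    show "\<forall>i<m. cinner (e i) x0 = 0"
      using x0_e by blast
    show "cinner (?g x0) (?g y) = 0" if "\<forall>i<m. cinner (e i) y = 0" "cinner x0 y = 0" for y
      using partial_cinner_maximizer_orthogonal[of S, OF add scale \<open>x0 \<in> S\<close> \<open>norm x0 = 1\<close> max] that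
      by (simp add: S_def)
  qed
  moreover have "cinner x0 x0 = 1"
    using \<open>norm x0 = 1\<close> by (simp add: norm_eq_1_iff_cinner_self)
  ultimately have "singular_family \<phi> (Suc m) (e(m := x0))"
    using fam x0_e \<open>?g x0 \<noteq> 0\<close>
    unfolding singular_family_def orthonormal_upto_def by (auto simp: less_Suc_eq)
  then show ?thesis
    by blast
qed

lemma maximal_singular_family_expansion:
  assumes fam: "singular_family \<phi> k e" and maximal: "\<not> (\<exists>e'. singular_family \<phi> (Suc k) e')"
  shows "\<phi> = (\<Sum>i<k. tensor_vec (e i) (partial_cinner \<phi> (e i)))"
proof -
  let ?g = "partial_cinner \<phi>"
  have e: "orthonormal_upto k e"
    using fam by (simp add: singular_family_def)
  have "?g (axis p 1) = (\<Sum>i<k. (e i $ p) *s ?g (e i))" for p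
  proof -
    define x' where "x' = axis p 1 - (\<Sum>i<k. cinner (e i) (axis p 1) *s e i)"
    have "?g x' = 0"
      using singular_family_extend[OF fam, of x'] orthonormal_upto_residual[OF e] maximal
      by (auto simp: x'_def)
    then show ?thesis
      by (simp add: x'_def partial_cinner_diff partial_cinner_sum partial_cinner_scale cnj_cinner
          cinner_axis_left)
  qed
  then show ?thesis
    by (simp add: vec_eq_iff sum_component tensor_vec_def partial_cinner_axis[symmetric])
qed

lemma schmidt_decomp_of_singular_family:
  assumes fam: "singular_family \<phi> k e"
    and \<phi>: "\<phi> = (\<Sum>i<k. tensor_vec (e i) (partial_cinner \<phi> (e i)))"
  shows "schmidt_decomp \<phi> k"
proof -
  let ?g = "partial_cinner \<phi>"
  have e: "orthonormal_upto k e" and ge: "\<forall>i<k. ?g (e i) \<noteq> 0"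
    and eig: "\<forall>i<k. \<forall>y. cinner (e i) y = 0 \<longrightarrow> cinner (?g (e i)) (?g y) = 0"
    using fam by (auto simp: singular_family_def)
  define s where "s i = norm (?g (e i))" for i
  define f where "f i = complex_of_real (1 / s i) *s ?g (e i)" for i
  have s: "\<forall>i<k. s i > 0"
    using ge by (simp add: s_def)
  note \<phi>
  also have "(\<Sum>i<k. tensor_vec (e i) (?g (e i))) = (\<Sum>i<k. complex_of_real (s i) *s tensor_vec (e i) (f i))"
    using s by (intro sum.cong) (simp_all add: f_def tensor_vec_scale_right less_imp_neq[symmetric])
  finally have \<phi>_eq: "\<phi> = (\<Sum>i<k. complex_of_real (s i) *s tensor_vec (e i) (f i))" .
  have f: "orthonormal_upto k f"
    unfolding orthonormal_upto_def
  proof (intro allI impI)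
    fix i j assume "i < k" "j < k"
    show "cinner (f i) (f j) = (if i = j then 1 else 0)"
    proof (cases "i = j")
      case True
      then show ?thesis
        using s \<open>i < k\<close>
        by (simp add: f_def s_def cinner_self norm_scale_vec norm_divide power2_eq_square)
    next
      case False
      then have "cinner (?g (e i)) (?g (e j)) = 0"
        using eig e \<open>i < k\<close> \<open>j < k\<close> by (simp add: orthonormal_upto_def)
      then show ?thesis
        using False by (simp add: f_def cinner_scale_left cinner_scale_right)
    qed
  qed
  show ?thesis
    unfolding schmidt_decomp_iff using s e f \<phi>_eq by (intro exI[of _ s] exI[of _ e] exI[of _ f] conjI)
qed

lemma schmidt_decomp_exists: "\<exists>k. schmidt_decomp \<phi> k"
proof -
  let ?P = "\<lambda>m. \<exists>e. singular_family \<phi> m e"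
  have bound: "m \<le> DIM(complex^'a)" if "?P m" for m
    using that orthonormal_upto_card_le by (auto simp: singular_family_def)
  have "?P 0"
    by (simp add: singular_family_def orthonormal_upto_def)
  then have "?P (Greatest ?P)"
    using bound by (rule GreatestI_nat)
  then obtain e where fam: "singular_family \<phi> (Greatest ?P) e"
    by blast
  have "\<not> ?P (Suc (Greatest ?P))"
    using Greatest_le_nat[of ?P _ "DIM(complex^'a)"] bound by fastforce
  then have "schmidt_decomp \<phi> (Greatest ?P)"
    using schmidt_decomp_of_singular_family[OF fam maximal_singular_family_expansion[OF fam]] by blast
  then show ?thesis ..
qed

lemma sqrt_of_nat_le: "sqrt (real n) \<le> real n"
  using real_sqrt_le_mono[of "real n" "(real n)\<^sup>2"] by (cases n) (auto simp: power2_eq_square)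

theorem lemmaB11:
  fixes \<rho> :: "complex^('a::finite \<times> 'b::finite)^('a \<times> 'b)"
    and \<phi> :: "complex^('a \<times> 'b)"
    and P :: "complex^'a^'a"
    and r :: nat and \<eta> :: real
  assumes "density_matrix \<rho>"
    and "norm \<phi> = 1"
    and "schmidt_rank \<phi> \<le> r"
    and "orth_proj P"
    and "op_norm ((mat 1 - P) ** ptrace_B \<rho> ** (mat 1 - P)) \<le> \<eta>"
  shows "cmod (cinner \<phi> ((tensor_mat P (mat 1) ** \<rho> ** tensor_mat P (mat 1)) *v \<phi>)
               - cinner \<phi> (\<rho> *v \<phi>)) \<le> 2 * real r * sqrt \<eta>"
proof -
  have "schmidt_decomp \<phi> (schmidt_rank \<phi>)"
    unfolding schmidt_rank_def by (rule LeastI_ex) (rule schmidt_decomp_exists)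
  then have "cmod (cinner \<phi> ((tensor_mat P (mat 1) ** \<rho> ** tensor_mat P (mat 1)) *v \<phi>)
               - cinner \<phi> (\<rho> *v \<phi>)) \<le> 2 * sqrt (real (schmidt_rank \<phi>)) * sqrt \<eta>"
    by (rule expectation_projection_error_le[OF assms(1,2,4,5)])
  also have "\<dots> \<le> 2 * real r * sqrt \<eta>"
  proof -
    have "sqrt (real (schmidt_rank \<phi>)) \<le> real r"
      using sqrt_of_nat_le assms(3) by (meson of_nat_le_iff order_trans)
    moreover have "0 \<le> \<eta>"
      using assms(5) op_norm_nonneg order_trans by blast
    ultimately show ?thesis
      by (simp add: mult_right_mono)
  qed
  finally show ?thesis .
qed

end
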